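(* Let $(\alpha_n)_{n\ge0}$ be complex numbers with $|\alpha_n|<1$ and let $\mu_{n,r,s}$ be as in the context. For all nonnegative integers $n,r,s$, \[ \mu_{n,r,s}=\sum_{p\in\mathfrak{L}_{n,r,s}}\mathrm{wt}_L(p). \]
   Context: For a polynomial $f(z)=\sum_{k=0}^n a_kz^k$ of degree $n$, write $\overline{f}(z)=\sum_k\overline{a_k}z^k$ and $f^*(z)=z^n\overline{f}(1/z)$. Define monic $\Phi_n$ by $\Phi_0=1$, $\Phi_{n+1}(z)=z\Phi_n(z)-\overline{\alpha_n}\Phi_n^*(z)$. Let $\mathcal{L}$ be the unique linear functional on Laurent polynomials with $\mathcal{L}(1)=1$ and $\mathcal{L}(\Phi_m(z)\overline{\Phi_n}(1/z))=0$ for $m\neq n$; set $\langle f,g\rangle=\mathcal{L}(f(z)\overline{g}(1/z))$ and $\mu_{n,r,s}=\langle\Phi_s(z),z^n\Phi_r(z)\rangle/\langle\Phi_s,\Phi_s\rangle$. Set $\alpha_{-1}=-1$. A Łukasiewicz path is a finite sequence of lattice points in $\mathbb{Z}\times\mathbb{Z}_{\ge0}$ whose steps are of the form $(1,k)$ with $k\le 1$ integer; $\mathfrak{L}_{n,r,s}$ is the set of such paths from $(0,r)$ to $(n,s)$. The weight $\mathrm{wt}_L(p)$ is the product of the weights of the steps, where an up-step $(a,b)\to(a+1,b+1)$ has weight $1$ and a step $(a,b)\to(a+1,b-k)$, $k=0,1,\dots,b$, has weight $-\alpha_b\overline{\alpha_{b-k-1}}\prod_{j=b-k}^{b-1}(1-|\alpha_j|^2)$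 (the empty product being $1$). *)

theory Defs
  imports "HOL-Computational_Algebra.Polynomial" Complex_Main
begin

definition pconj :: "complex poly \<Rightarrow> complex poly" where
  "pconj p = map_poly cnj p"

text \<open>Reversed polynomial f^*(z) = z^n conj-f(1/z), n = degree f.\<close>
definition pstar :: "complex poly \<Rightarrow> complex poly" where
  "pstar p = reflect_poly (pconj p)"

text \<open>Monic orthogonal polynomials via the Szego recursion.\<close>
fun Phi :: "(nat \<Rightarrow> complex) \<Rightarrow> nat \<Rightarrow> complex poly" where
  "Phi \<alpha> 0 = 1"
| "Phi \<alpha> (Suc n) = [:0, 1:] * Phi \<alpha> n - smult (cnj (\<alpha> n)) (pstar (Phi \<alpha> n))"

text \<open>Laurent polynomials are represented as finitely supported coefficient
  functions int => complex (coefficient of z^k at k).\<close>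
definition laurent :: "(int \<Rightarrow> complex) \<Rightarrow> bool" where
  "laurent u \<longleftrightarrow> finite {k. u k \<noteq> 0}"

definition laurent_one :: "int \<Rightarrow> complex" where
  "laurent_one = (\<lambda>k. if k = 0 then 1 else 0)"

definition laurent_linear :: "((int \<Rightarrow> complex) \<Rightarrow> complex) \<Rightarrow> bool" where
  "laurent_linear L \<longleftrightarrow>
     (\<forall>u v. laurent u \<longrightarrow> laurent v \<longrightarrow> L (\<lambda>k. u k + v k) = L u + L v) \<and>
     (\<forall>a u. laurent u \<longrightarrow> L (\<lambda>k. a * u k) = a * L u)"

text \<open>The Laurent polynomial f(z) * conj-g(1/z), as coefficient function.\<close>
definition lprod :: "complex poly \<Rightarrow> complex poly \<Rightarrow> int \<Rightarrow> complex" where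
  "lprod f g k = (\<Sum>i\<le>degree f. \<Sum>j\<le>degree g.
       if int i - int j = k then coeff f i * cnj (coeff g j) else 0)"

definition linner :: "((int \<Rightarrow> complex) \<Rightarrow> complex) \<Rightarrow> complex poly \<Rightarrow> complex poly \<Rightarrow> complex" where
  "linner L f g = L (lprod f g)"

definition mu :: "((int \<Rightarrow> complex) \<Rightarrow> complex) \<Rightarrow> (nat \<Rightarrow> complex) \<Rightarrow> nat \<Rightarrow> nat \<Rightarrow> nat \<Rightarrow> complex" where
  "mu L \<alpha> n r s = linner L (Phi \<alpha> s) (monom 1 n * Phi \<alpha> r) / linner L (Phi \<alpha> s) (Phi \<alpha> s)"

definition alpha_ext :: "(nat \<Rightarrow> complex) \<Rightarrow> int \<Rightarrow> complex" where
  "alpha_ext \<alpha> k = (if k = -1 then -1 else \<alpha> (nat k))"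

text \<open>Lukasiewicz paths from (0,r) to (n,s), given by their list of heights
  h_0,...,h_n; steps (1,k) with k <= 1.\<close>
definition luk_paths :: "nat \<Rightarrow> nat \<Rightarrow> nat \<Rightarrow> nat list set" where
  "luk_paths n r s = {hs. length hs = Suc n \<and> hs ! 0 = r \<and> hs ! n = s \<and>
       (\<forall>i<n. hs ! Suc i \<le> hs ! i + 1)}"

definition step_wt :: "(nat \<Rightarrow> complex) \<Rightarrow> nat \<Rightarrow> nat \<Rightarrow> complex" where
  "step_wt \<alpha> b b' = (if b' = b + 1 then 1 else
     - \<alpha> b * cnj (alpha_ext \<alpha> (int b' - 1)) *
       (\<Prod>j\<in>{b'..<b}. complex_of_real (1 - (cmod (\<alpha> j))\<^sup>2)))"

definition wt_L :: "(nat \<Rightarrow> complex) \<Rightarrow> nat list \<Rightarrow> complex" where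
  "wt_L \<alpha> hs = (\<Prod>i<length hs - 1. step_wt \<alpha> (hs ! i) (hs ! Suc i))"

end

theory Submission
  imports Defs
begin

text \<open>
  Let psi_t be the polynomials produced by the Szego recursion from the conjugate
  coefficients cnj(alpha_t). Conjugating the second argument of the inner product turns
  z^n Phi_r into z^n psi_r, so everything reduces to the bilinear pairing of Phi_s(z) with
  h(1/z). Expanding Phi_t^* in the basis Phi_0, ..., Phi_t shows that z psi_t is the sum of
  wt(t -> u) psi_u over the Lukasiewicz steps t -> u; iterating, the coefficient of psi_t
  in z^n psi_r is the weighted sum over the paths from (0,r) to (n,t). Biorthogonality of
  Phi and psi picks out t = s, and the diagonal pairing is the product of the 1 - |alpha_j|^2
  for j < s, which is nonzero because |alpha_j| < 1.
\<close>

lemma coeff_pconj [simp]: "coeff (pconj p) n = cnj (coeff p n)"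
  by (simp add: pconj_def coeff_map_poly)

lemma degree_pconj [simp]: "degree (pconj p) = degree p"
  unfolding pconj_def by (rule degree_map_poly) simp

lemma pconj_mult: "pconj (p * q) = pconj p * pconj q"
  by (simp add: poly_eq_iff coeff_mult)

lemma pconj_monom: "pconj (monom c n) = monom (cnj c) n"
  by (simp add: poly_eq_iff coeff_monom)

lemma coeff_pstar:
  "coeff (pstar p) i = (if i \<le> degree p then cnj (coeff p (degree p - i)) else 0)"
  by (simp add: pstar_def coeff_reflect_poly)

lemma degree_pstar_le: "degree (pstar p) \<le> degree p"
  unfolding pstar_def by (metis degree_reflect_poly_le degree_pconj)

lemma degree_Phi [simp]: "degree (Phi \<alpha> n) = n"
  and lead_coeff_Phi [simp]: "coeff (Phi \<alpha> n) n = 1"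
proof (induction n)
  case (Suc n)
  have "degree (smult (cnj (\<alpha> n)) (pstar (Phi \<alpha> n))) \<le> n"
    using degree_pstar_le[of "Phi \<alpha> n"] Suc.IH by (metis degree_smult_le order_trans)
  then have "degree (Phi \<alpha> (Suc n)) \<le> Suc n" and "coeff (Phi \<alpha> (Suc n)) (Suc n) = 1"
    using Suc.IH by (auto intro!: degree_diff_le simp: coeff_pstar degree_pCons_le)
  then show "degree (Phi \<alpha> (Suc n)) = Suc n" "coeff (Phi \<alpha> (Suc n)) (Suc n) = 1"
    by (auto intro!: antisym le_degree)
qed simp_all

lemma pconj_Phi: "pconj (Phi \<alpha> n) = Phi (\<lambda>k. cnj (\<alpha> k)) n"
proof (induction n)
  case (Suc n)
  then show ?case
    by (auto simp: poly_eq_iff coeff_pCons' coeff_pstar)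
qed (simp add: pconj_def)

lemma pstar_Phi_Suc:
  "pstar (Phi \<alpha> (Suc t)) = pstar (Phi \<alpha> t) - smult (\<alpha> t) ([:0, 1:] * Phi \<alpha> t)"
proof (rule poly_eqI)
  fix i
  show "coeff (pstar (Phi \<alpha> (Suc t))) i = coeff (pstar (Phi \<alpha> t) - smult (\<alpha> t) ([:0, 1:] * Phi \<alpha> t)) i"
    unfolding coeff_pstar[of "Phi \<alpha> (Suc t)"] degree_Phi
    by (cases i) (auto simp: coeff_pstar coeff_pCons' Suc_diff_le coeff_eq_0)
qed

lemma X_mult_Phi:
  "[:0, 1:] * Phi \<alpha> t = Phi \<alpha> (Suc t) + smult (cnj (\<alpha> t)) (pstar (Phi \<alpha> t))"
  by (simp del: mult_pCons_left)

lemma smult_sum_right: "smult c (\<Sum>u\<in>U. p u) = (\<Sum>u\<in>U. smult c (p u))"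
  by (induction U rule: infinite_finite_induct) (simp_all add: smult_add_right)

lemma pstar_Phi_expansion:
  "pstar (Phi \<alpha> t) = (\<Sum>u\<le>t. smult (- alpha_ext \<alpha> (int u - 1) *
     (\<Prod>j\<in>{u..<t}. complex_of_real (1 - (cmod (\<alpha> j))\<^sup>2))) (Phi \<alpha> u))"
proof (induction t)
  case 0
  show ?case by (simp add: pstar_def pconj_def alpha_ext_def)
next
  case (Suc t)
  define \<rho> where "\<rho> = complex_of_real (1 - (cmod (\<alpha> t))\<^sup>2)"
  have "\<rho> = 1 - \<alpha> t * cnj (\<alpha> t)"
    unfolding \<rho>_def of_real_diff complex_norm_square by simp
  then have "pstar (Phi \<alpha> (Suc t)) = smult \<rho> (pstar (Phi \<alpha> t)) - smult (\<alpha> t) (Phi \<alpha> (Suc t))"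
    unfolding pstar_Phi_Suc X_mult_Phi
    by (simp add: smult_add_right smult_diff_left del: Phi.simps)
  also have "\<dots> = (\<Sum>u\<le>Suc t. smult (- alpha_ext \<alpha> (int u - 1) *
     (\<Prod>j\<in>{u..<Suc t}. complex_of_real (1 - (cmod (\<alpha> j))\<^sup>2))) (Phi \<alpha> u))"
    unfolding Suc smult_sum_right
    by (simp add: \<rho>_def alpha_ext_def prod.atLeastLessThan_Suc mult_ac del: Phi.simps)
  finally show ?case .
qed

lemma X_mult_Phi_cnj_expansion:
  "[:0, 1:] * Phi (\<lambda>k. cnj (\<alpha> k)) t = (\<Sum>u\<le>Suc t. smult (step_wt \<alpha> t u) (Phi (\<lambda>k. cnj (\<alpha> k)) u))"
proof -
  have "alpha_ext (\<lambda>k. cnj (\<alpha> k)) k = cnj (alpha_ext \<alpha> k)" for k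
    by (simp add: alpha_ext_def)
  then show ?thesis
    unfolding X_mult_Phi[of "\<lambda>k. cnj (\<alpha> k)"] pstar_Phi_expansion[of "\<lambda>k. cnj (\<alpha> k)"] smult_sum_right
    by (simp add: step_wt_def mult_ac del: Phi.simps)
qed

lemma luk_paths_height_le: "hs \<in> luk_paths n r s \<Longrightarrow> i \<le> n \<Longrightarrow> hs ! i \<le> r + i"
proof (induction i)
  case (Suc i)
  then have "hs ! Suc i \<le> hs ! i + 1" by (simp add: luk_paths_def)
  with Suc show ?case by simp
qed (simp add: luk_paths_def)

lemma luk_paths_empty:
  assumes "r + n < s"
  shows "luk_paths n r s = {}"
proof -
  have "s \<le> r + n" if "hs \<in> luk_paths n r s" for hs
    using that luk_paths_height_le[OF that, of n] by (simp add: luk_paths_def)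
  with assms show ?thesis
    by fastforce
qed

lemma finite_luk_paths: "finite (luk_paths n r s)"
proof (rule finite_subset)
  show "luk_paths n r s \<subseteq> {hs. set hs \<subseteq> {..r + n} \<and> length hs = Suc n}"
  proof safe
    fix hs x assume hs: "hs \<in> luk_paths n r s" and "x \<in> set hs"
    then obtain i where "i \<le> n" "x = hs ! i"
      by (auto simp: luk_paths_def in_set_conv_nth less_Suc_eq_le)
    then show "x \<le> r + n"
      using luk_paths_height_le[OF hs] by fastforce
  qed (simp add: luk_paths_def)
qed (simp add: finite_lists_length_eq)

lemma luk_paths_0: "luk_paths 0 r s = (if s = r then {[r]} else {})"
  by (auto simp: luk_paths_def length_Suc_conv)

lemma luk_paths_Suc:
  "luk_paths (Suc n) r s = (\<Union>t\<in>{t. t \<le> r + n \<and> s \<le> Suc t}. (\<lambda>p. p @ [s]) ` luk_paths n r t)"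
proof (intro equalityI subsetI)
  fix q assume q: "q \<in> luk_paths (Suc n) r s"
  define p where "p = take (Suc n) q"
  have "q = p @ [s]"
    using q take_Suc_conv_app_nth[of "Suc n" q] by (simp add: p_def luk_paths_def)
  moreover have "p \<in> luk_paths n r (p ! n)" and "s \<le> Suc (p ! n)"
    using q by (auto simp: p_def luk_paths_def)
  moreover have "p ! n \<le> r + n"
    using luk_paths_height_le[OF \<open>p \<in> luk_paths n r (p ! n)\<close>] by simp
  ultimately show "q \<in> (\<Union>t\<in>{t. t \<le> r + n \<and> s \<le> Suc t}. (\<lambda>p. p @ [s]) ` luk_paths n r t)"
    by blast
next
  fix q assume "q \<in> (\<Union>t\<in>{t. t \<le> r + n \<and> s \<le> Suc t}. (\<lambda>p. p @ [s]) ` luk_paths n r t)"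
  then obtain t p where "s \<le> Suc t" "p \<in> luk_paths n r t" "q = p @ [s]"
    by blast
  then show "q \<in> luk_paths (Suc n) r s"
    by (auto simp: luk_paths_def nth_append less_Suc_eq)
qed

lemma wt_L_snoc: "length p = Suc n \<Longrightarrow> wt_L \<alpha> (p @ [s]) = wt_L \<alpha> p * step_wt \<alpha> (p ! n) s"
  by (simp add: wt_L_def nth_append lessThan_Suc)

lemma sum_wt_luk_paths_Suc:
  "(\<Sum>q\<in>luk_paths (Suc n) r s. wt_L \<alpha> q) =
   (\<Sum>t\<le>r + n. (\<Sum>p\<in>luk_paths n r t. wt_L \<alpha> p) * (if s \<le> Suc t then step_wt \<alpha> t s else 0))"
proof -
  let ?T = "{t. t \<le> r + n \<and> s \<le> Suc t}"
  have disjoint: "(\<lambda>p. p @ [s]) ` luk_paths n r t \<inter> (\<lambda>p. p @ [s]) ` luk_paths n r t' = {}"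
    if "t \<noteq> t'" for t t'
    using that by (auto simp: luk_paths_def)
  have "(\<Sum>q\<in>luk_paths (Suc n) r s. wt_L \<alpha> q) =
      (\<Sum>t\<in>?T. \<Sum>q\<in>(\<lambda>p. p @ [s]) ` luk_paths n r t. wt_L \<alpha> q)"
    unfolding luk_paths_Suc
    by (rule sum.UNION_disjoint) (simp_all add: finite_luk_paths disjoint)
  also have "\<dots> = (\<Sum>t\<in>?T. \<Sum>p\<in>luk_paths n r t. wt_L \<alpha> p * step_wt \<alpha> t s)"
  proof (rule sum.cong[OF refl])
    fix t
    have "inj_on (\<lambda>p. p @ [s]) (luk_paths n r t)"
      by (simp add: inj_on_def)
    then show "(\<Sum>q\<in>(\<lambda>p. p @ [s]) ` luk_paths n r t. wt_L \<alpha> q) =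
        (\<Sum>p\<in>luk_paths n r t. wt_L \<alpha> p * step_wt \<alpha> t s)"
      by (simp add: sum.reindex) (simp add: luk_paths_def wt_L_snoc)
  qed
  also have "\<dots> = (\<Sum>t\<in>{t \<in> {..r + n}. s \<le> Suc t}. (\<Sum>p\<in>luk_paths n r t. wt_L \<alpha> p) * step_wt \<alpha> t s)"
    by (simp add: sum_distrib_right)
  finally show ?thesis
    by (simp only: sum.inter_filter finite_atMost if_distrib mult_zero_right)
qed

lemma monom_mult_Phi_cnj_expansion:
  "monom 1 n * Phi (\<lambda>k. cnj (\<alpha> k)) r =
     (\<Sum>t\<le>r + n. smult (\<Sum>p\<in>luk_paths n r t. wt_L \<alpha> p) (Phi (\<lambda>k. cnj (\<alpha> k)) t))"
proof (induction n)
  case 0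
  have "smult (\<Sum>p\<in>luk_paths 0 r t. wt_L \<alpha> p) (Phi (\<lambda>k. cnj (\<alpha> k)) t) =
      (if t = r then Phi (\<lambda>k. cnj (\<alpha> k)) t else 0)" for t
    by (simp add: luk_paths_0 wt_L_def del: Phi.simps)
  then show ?case
    by (simp add: monom_0 del: Phi.simps)
next
  case (Suc n)
  let ?P = "\<lambda>n t. \<Sum>p\<in>luk_paths n r t. wt_L \<alpha> p" and ?\<psi> = "Phi (\<lambda>k. cnj (\<alpha> k))"
  let ?w = "\<lambda>t u. if u \<le> Suc t then step_wt \<alpha> t u else 0"
  have "monom 1 (Suc n) * ?\<psi> r = [:0, 1:] * (monom 1 n * ?\<psi> r)"
    by (simp add: monom_Suc del: Phi.simps)
  also have "\<dots> = (\<Sum>t\<le>r + n. smult (?P n t) ([:0, 1:] * ?\<psi> t))"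
    by (simp only: Suc.IH sum_distrib_left mult_smult_right)
  also have "\<dots> = (\<Sum>t\<le>r + n. \<Sum>u\<le>Suc (r + n). smult (?P n t * ?w t u) (?\<psi> u))"
  proof (rule sum.cong[OF refl])
    fix t assume "t \<in> {..r + n}"
    then show "smult (?P n t) ([:0, 1:] * ?\<psi> t) = (\<Sum>u\<le>Suc (r + n). smult (?P n t * ?w t u) (?\<psi> u))"
      unfolding X_mult_Phi_cnj_expansion smult_sum_right
      by (intro sum.mono_neutral_cong_left) auto
  qed
  also have "\<dots> = (\<Sum>u\<le>r + Suc n. smult (?P (Suc n) u) (?\<psi> u))"
    by (subst sum.swap) (simp add: sum_wt_luk_paths_Suc smult_sum del: Phi.simps)
  finally show ?case .
qed

text \<open>The coefficients of the Laurent polynomial f(z) h(1/z); unlike lprod, this is bilinear.\<close>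

definition lpair :: "complex poly \<Rightarrow> complex poly \<Rightarrow> int \<Rightarrow> complex" where
  "lpair f h k = (\<Sum>i\<le>degree f. \<Sum>j\<le>degree h. of_bool (int i - int j = k) * coeff f i * coeff h j)"

lemma linner_eq_lpair: "linner L f g = L (lpair f (pconj g))"
proof -
  have "lprod f g = lpair f (pconj g)"
    by (auto simp: fun_eq_iff lprod_def lpair_def intro!: sum.cong)
  then show ?thesis
    by (simp add: linner_def)
qed

lemma lpair_bounded:
  assumes "degree f \<le> N" "degree h \<le> N"
  shows "lpair f h k = (\<Sum>i\<le>N. \<Sum>j\<le>N. of_bool (int i - int j = k) * coeff f i * coeff h j)"
proof -
  have "lpair f h k = (\<Sum>i\<le>degree f. \<Sum>j\<le>N. of_bool (int i - int j = k) * coeff f i * coeff h j)"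
    unfolding lpair_def
    by (intro sum.cong refl sum.mono_neutral_left) (use assms in \<open>auto simp: coeff_eq_0 not_le\<close>)
  also have "\<dots> = (\<Sum>i\<le>N. \<Sum>j\<le>N. of_bool (int i - int j = k) * coeff f i * coeff h j)"
    by (intro sum.mono_neutral_left) (use assms in \<open>auto simp: coeff_eq_0 not_le\<close>)
  finally show ?thesis .
qed

lemma laurent_lpair: "laurent (lpair f h)"
proof -
  have "{k. lpair f h k \<noteq> 0} \<subseteq> {- int (degree h)..int (degree f)}"
    by (force simp: lpair_def intro: ccontr)
  then show ?thesis
    unfolding laurent_def by (rule finite_subset) simp
qed

lemma lpair_add_left: "lpair (p + q) h k = lpair p h k + lpair q h k"
proof -
  define N where "N = max (degree h) (max (degree p) (degree q))"
  have "degree (p + q) \<le> N"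
    unfolding N_def by (meson degree_add_le max.cobounded1 max.cobounded2 order_trans)
  then show ?thesis
    by (simp add: lpair_bounded[of _ N] N_def algebra_simps sum.distrib)
qed

lemma lpair_add_right: "lpair f (p + q) k = lpair f p k + lpair f q k"
proof -
  define N where "N = max (degree f) (max (degree p) (degree q))"
  have "degree (p + q) \<le> N"
    unfolding N_def by (meson degree_add_le max.cobounded1 max.cobounded2 order_trans)
  then show ?thesis
    by (simp add: lpair_bounded[of _ N] N_def algebra_simps sum.distrib)
qed

lemma lpair_smult_left: "lpair (smult c p) h k = c * lpair p h k"
  using degree_smult_le[of c p]
  by (simp add: lpair_bounded[of _ "max (degree p) (degree h)"] sum_distrib_left mult_ac)

lemma lpair_smult_right: "lpair f (smult c p) k = c * lpair f p k"
  using degree_smult_le[of c p]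
  by (simp add: lpair_bounded[of _ "max (degree f) (degree p)"] sum_distrib_left mult_ac)

lemma lpair_X_mult: "lpair ([:0, 1:] * f) ([:0, 1:] * h) = lpair f h"
proof
  fix k
  define N where "N = max (degree f) (degree h)"
  have X_mult: "[:0, 1:] * p = pCons 0 p" for p :: "complex poly"
    by simp
  have "degree (pCons 0 f) \<le> Suc N" "degree (pCons 0 h) \<le> Suc N"
    by (auto simp: N_def intro: order_trans[OF degree_pCons_le])
  then have "lpair (pCons 0 f) (pCons 0 h) k = (\<Sum>i\<le>Suc N. \<Sum>j\<le>Suc N.
      of_bool (int i - int j = k) * coeff (pCons 0 f) i * coeff (pCons 0 h) j)"
    by (rule lpair_bounded)
  also have "\<dots> = (\<Sum>i\<le>N. \<Sum>j\<le>N. of_bool (int i - int j = k) * coeff f i * coeff h j)"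
    by (simp only: sum.atMost_Suc_shift coeff_pCons_0 coeff_pCons_Suc mult_zero_left mult_zero_right
        sum.neutral_const add_0_left) simp
  also have "\<dots> = lpair f h k"
    by (rule lpair_bounded[symmetric]) (simp_all add: N_def)
  finally show "lpair ([:0, 1:] * f) ([:0, 1:] * h) k = lpair f h k"
    unfolding X_mult .
qed

lemma lpair_reflect_poly:
  assumes "degree f = degree h"
  shows "lpair (reflect_poly f) (reflect_poly h) = lpair h f"
proof
  fix k
  define N where "N = degree f"
  define G where "G i j = of_bool (int j - int i = k) * coeff f i * coeff h j" for i j
  have rev: "(\<Sum>i\<le>N. g (N - i)) = (\<Sum>i\<le>N. g i)" for g :: "nat \<Rightarrow> complex"
    by (rule sum.reindex_bij_witness[of _ "\<lambda>i. N - i" "\<lambda>i. N - i"]) auto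
  have "lpair (reflect_poly f) (reflect_poly h) k = (\<Sum>i\<le>N. \<Sum>j\<le>N. G (N - i) (N - j))"
    using assms degree_reflect_poly_le[of f] degree_reflect_poly_le[of h]
    by (auto simp: lpair_bounded[of _ N] N_def G_def coeff_reflect_poly of_nat_diff intro!: sum.cong)
  also have "\<dots> = (\<Sum>i\<le>N. \<Sum>j\<le>N. G (N - i) j)"
    by (rule sum.cong[OF refl], rule rev)
  also have "\<dots> = (\<Sum>i\<le>N. \<Sum>j\<le>N. G i j)"
    by (rule rev[of "\<lambda>i. \<Sum>j\<le>N. G i j"])
  also have "\<dots> = (\<Sum>j\<le>N. \<Sum>i\<le>N. G i j)"
    by (rule sum.swap)
  also have "\<dots> = lpair h f k"
    using assms by (simp add: lpair_bounded[of _ N] N_def G_def mult_ac)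
  finally show "lpair (reflect_poly f) (reflect_poly h) k = lpair h f k" .
qed

context
  fixes L :: "(int \<Rightarrow> complex) \<Rightarrow> complex"
  assumes L_linear: "laurent_linear L"
begin

lemma L_lpair_add_left: "L (lpair (p + q) h) = L (lpair p h) + L (lpair q h)"
  using L_linear laurent_lpair unfolding laurent_linear_def
  by (simp add: lpair_add_left[abs_def])

lemma L_lpair_add_right: "L (lpair f (p + q)) = L (lpair f p) + L (lpair f q)"
  using L_linear laurent_lpair unfolding laurent_linear_def
  by (simp add: lpair_add_right[abs_def])

lemma L_lpair_smult_left: "L (lpair (smult c p) h) = c * L (lpair p h)"
  using L_linear laurent_lpair unfolding laurent_linear_def
  by (simp add: lpair_smult_left[abs_def])

lemma L_lpair_smult_right: "L (lpair f (smult c p)) = c * L (lpair f p)"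
  using L_linear laurent_lpair unfolding laurent_linear_def
  by (simp add: lpair_smult_right[abs_def])

lemma L_lpair_diff_left: "L (lpair (p - q) h) = L (lpair p h) - L (lpair q h)"
  using L_lpair_add_left[of p "smult (-1) q"] L_lpair_smult_left[of "-1"] by simp

lemma L_lpair_diff_right: "L (lpair f (p - q)) = L (lpair f p) - L (lpair f q)"
  using L_lpair_add_right[of f p "smult (-1) q"] L_lpair_smult_right[of f "-1"] by simp

lemma L_lpair_0_left [simp]: "L (lpair 0 h) = 0"
  using L_lpair_smult_left[of 0 0 h] by simp

lemma L_lpair_0_right [simp]: "L (lpair f 0) = 0"
  using L_lpair_smult_right[of f 0 0] by simp

lemma L_lpair_sum_left: "L (lpair (\<Sum>u\<in>U. p u) h) = (\<Sum>u\<in>U. L (lpair (p u) h))"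
  by (induction U rule: infinite_finite_induct) (simp_all add: L_lpair_add_left)

lemma L_lpair_sum_right: "L (lpair f (\<Sum>u\<in>U. p u)) = (\<Sum>u\<in>U. L (lpair f (p u)))"
  by (induction U rule: infinite_finite_induct) (simp_all add: L_lpair_add_right)

context
  fixes \<alpha> :: "nat \<Rightarrow> complex"
  assumes L_orth: "\<And>m k. m \<noteq> k \<Longrightarrow> linner L (Phi \<alpha> m) (Phi \<alpha> k) = 0"
begin

lemma L_lpair_Phi_orth: "s \<noteq> t \<Longrightarrow> L (lpair (Phi \<alpha> s) (Phi (\<lambda>k. cnj (\<alpha> k)) t)) = 0"
  using L_orth[of s t] by (simp add: linner_eq_lpair pconj_Phi del: Phi.simps)

lemma L_lpair_Phi_pstar_right: "t < s \<Longrightarrow> L (lpair (Phi \<alpha> s) (pstar (Phi (\<lambda>k. cnj (\<alpha> k)) t))) = 0"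
  unfolding pstar_Phi_expansion[of "\<lambda>k. cnj (\<alpha> k)" t] L_lpair_sum_right L_lpair_smult_right
  by (simp add: L_lpair_Phi_orth del: Phi.simps)

lemma L_lpair_pstar_Phi_left: "t < s \<Longrightarrow> L (lpair (pstar (Phi \<alpha> t)) (Phi (\<lambda>k. cnj (\<alpha> k)) s)) = 0"
  unfolding pstar_Phi_expansion[of \<alpha> t] L_lpair_sum_left L_lpair_smult_left
  by (simp add: L_lpair_Phi_orth del: Phi.simps)

lemma L_lpair_Phi_Suc:
  "L (lpair (Phi \<alpha> (Suc n)) (Phi (\<lambda>k. cnj (\<alpha> k)) (Suc n))) =
     complex_of_real (1 - (cmod (\<alpha> n))\<^sup>2) * L (lpair (Phi \<alpha> n) (Phi (\<lambda>k. cnj (\<alpha> k)) n))"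
proof -
  let ?B = "\<lambda>f h. L (lpair f h)" and ?\<Phi> = "Phi \<alpha>" and ?\<psi> = "Phi (\<lambda>k. cnj (\<alpha> k))"
  have \<psi>_Suc: "?\<psi> (Suc n) = [:0, 1:] * ?\<psi> n - smult (\<alpha> n) (pstar (?\<psi> n))"
    by (simp del: mult_pCons_left)
  have X_mult_\<psi>: "[:0, 1:] * ?\<psi> n = ?\<psi> (Suc n) + smult (\<alpha> n) (pstar (?\<psi> n))"
    using X_mult_Phi[of "\<lambda>k. cnj (\<alpha> k)" n] by simp
  have "pstar (?\<Phi> n) = reflect_poly (?\<psi> n)" "pstar (?\<psi> n) = reflect_poly (?\<Phi> n)"
    using pconj_Phi[of "\<lambda>k. cnj (\<alpha> k)" n] by (simp_all add: pstar_def pconj_Phi del: Phi.simps)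
  then have pstar_pstar: "?B (pstar (?\<Phi> n)) (pstar (?\<psi> n)) = ?B (?\<Phi> n) (?\<psi> n)"
    by (simp add: lpair_reflect_poly del: Phi.simps)
  have "?B (?\<Phi> (Suc n)) (?\<psi> (Suc n)) = ?B (?\<Phi> (Suc n)) ([:0, 1:] * ?\<psi> n)"
    unfolding \<psi>_Suc L_lpair_diff_right L_lpair_smult_right
    by (simp add: L_lpair_Phi_pstar_right del: Phi.simps)
  also have "\<dots> = ?B ([:0, 1:] * ?\<Phi> n) ([:0, 1:] * ?\<psi> n) - cnj (\<alpha> n) * ?B (pstar (?\<Phi> n)) ([:0, 1:] * ?\<psi> n)"
    by (simp only: Phi.simps(2) L_lpair_diff_left L_lpair_smult_left)
  also have "?B (pstar (?\<Phi> n)) ([:0, 1:] * ?\<psi> n) = \<alpha> n * ?B (?\<Phi> n) (?\<psi> n)"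
    unfolding X_mult_\<psi> L_lpair_add_right L_lpair_smult_right pstar_pstar
    by (simp add: L_lpair_pstar_Phi_left del: Phi.simps)
  finally show ?thesis
    unfolding lpair_X_mult of_real_diff complex_norm_square by (simp add: algebra_simps)
qed

lemma linner_Phi_Phi:
  assumes L_one: "L laurent_one = 1"
  shows "linner L (Phi \<alpha> n) (Phi \<alpha> n) = complex_of_real (\<Prod>j<n. 1 - (cmod (\<alpha> j))\<^sup>2)"
proof -
  have "lpair 1 1 = laurent_one"
    by (simp add: fun_eq_iff lpair_def laurent_one_def)
  then have "L (lpair (Phi \<alpha> n) (Phi (\<lambda>k. cnj (\<alpha> k)) n)) = complex_of_real (\<Prod>j<n. 1 - (cmod (\<alpha> j))\<^sup>2)"
    by (induction n) (simp_all add: L_one L_lpair_Phi_Suc del: Phi.simps(2))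
  then show ?thesis
    by (simp add: linner_eq_lpair pconj_Phi del: Phi.simps)
qed

end

end

theorem theorem3p4:
  fixes \<alpha> :: "nat \<Rightarrow> complex"
    and L :: "(int \<Rightarrow> complex) \<Rightarrow> complex"
  assumes alpha_bound: "\<And>k. cmod (\<alpha> k) < 1"
    and L_linear: "laurent_linear L"
    and L_one: "L laurent_one = 1"
    and L_orth: "\<And>m k. m \<noteq> k \<Longrightarrow> linner L (Phi \<alpha> m) (Phi \<alpha> k) = 0"
  shows "mu L \<alpha> n r s = (\<Sum>p\<in>luk_paths n r s. wt_L \<alpha> p)"
proof -
  let ?\<psi> = "Phi (\<lambda>k. cnj (\<alpha> k))" and ?P = "\<lambda>t. \<Sum>p\<in>luk_paths n r t. wt_L \<alpha> p"
  have "linner L (Phi \<alpha> s) (monom 1 n * Phi \<alpha> r) = L (lpair (Phi \<alpha> s) (monom 1 n * ?\<psi> r))"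
    by (simp add: linner_eq_lpair pconj_mult pconj_monom pconj_Phi del: Phi.simps)
  also have "\<dots> = (\<Sum>t\<le>r + n. ?P t * L (lpair (Phi \<alpha> s) (?\<psi> t)))"
    unfolding monom_mult_Phi_cnj_expansion L_lpair_sum_right[OF L_linear] L_lpair_smult_right[OF L_linear] ..
  also have "\<dots> = (\<Sum>t\<le>r + n. if t = s then ?P s * L (lpair (Phi \<alpha> s) (?\<psi> s)) else 0)"
    using L_lpair_Phi_orth[of L \<alpha>] L_linear L_orth by (intro sum.cong) auto
  also have "\<dots> = ?P s * L (lpair (Phi \<alpha> s) (?\<psi> s))"
    using luk_paths_empty[of r n s] by auto
  also have "L (lpair (Phi \<alpha> s) (?\<psi> s)) = linner L (Phi \<alpha> s) (Phi \<alpha> s)"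
    by (simp add: linner_eq_lpair pconj_Phi del: Phi.simps)
  finally have numerator: "linner L (Phi \<alpha> s) (monom 1 n * Phi \<alpha> r) = ?P s * linner L (Phi \<alpha> s) (Phi \<alpha> s)" .
  have "(\<Prod>j<s. 1 - (cmod (\<alpha> j))\<^sup>2) > 0"
    using alpha_bound by (intro prod_pos) (simp add: abs_square_less_1)
  moreover have "linner L (Phi \<alpha> s) (Phi \<alpha> s) = complex_of_real (\<Prod>j<s. 1 - (cmod (\<alpha> j))\<^sup>2)"
    using L_linear L_orth L_one by (rule linner_Phi_Phi)
  ultimately have "linner L (Phi \<alpha> s) (Phi \<alpha> s) \<noteq> 0"
    by (simp only: of_real_eq_0_iff less_irrefl)
  then show ?thesis
    unfolding mu_def numerator by simp
qed

end
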